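(* Let $(M,\cdot,1)$ be a monoid, $\Sigma$ a finite alphabet, $A=(Q,\Sigma,u,i_u,\delta,w,\rho)$ an $M$-DFA and $(g^\pi_A,f^\pi_A)$ the factorization on $L$ induced by $A$ for a selection function $\pi$. Let $N=N^{(g^\pi_A,f^\pi_A)}(f^\pi_A(\mathcal{A}),g^\pi_A(\mathcal{A}))$. Then: 1. $N$ is an $M$-DFA equivalent to $A$; 2. $N$ is transition-equalized; 3. if $A$ is minimal then $N$ is minimal; 4. there exists a minimal and transition-equalized $M$-DFA equivalent to $A$; 5. if $A$ is minimal then $f^\pi_A\circ f^\pi_A=f^\pi_A$; 6. if $A$ is minimal and transition-equalized then $f^{\pi_i}_A=f^{\pi_j}_A$ for any two selection functions $\pi_i,\pi_j$.
   Context: $L$ is the set of all functions $\Sigma^*\to M$; $\varepsilon$ the empty word; $(m\cdot\ell)(\gamma)=m\cdot\ell(\gamma)$; $\Delta_\alpha(\ell)(\gamma)=\ell(\alpha\gamma)$. An $M$-DFA is $A=(Q,\Sigma,u,i_u,\delta,w,\rho)$ with $Q$ finite nonempty, initial state $u$, initial value $i_u\in M$, $\delta:Q\times\Sigma\to Q$, $w:Q\times\Sigma\to M$, $\rho:Q\to M$. Write $q\alpha$ for the extended transition, $w^*(q,\varepsilon)=1$, $w^*(q,\alpha\sigma)=w^*(q,\alpha)\cdot w(q\alpha,\sigma)$; $\mathcal{A}(\alpha)=i_u\cdot w^*(u,\alpha)\cdot\rho(u\alpha)$ is the recognized language and $\mathcal{A}_q(\alpha)=w^*(q,\alpha)\cdot\rho(q\alpha)$.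 Equivalent: same recognized language. Minimal: no equivalent $M$-DFA has fewer states. Transition-equalized: for all $p,q\in Q$, $\sigma,\tau\in\Sigma$, $\Delta_\sigma(\mathcal{A}_q)=\Delta_\tau(\mathcal{A}_p)$ implies $\delta(q,\sigma)=\delta(p,\tau)$ and $w(q,\sigma)=w(p,\tau)$. Induced factorization: $P_A=\{((\sigma,q),\Delta_\sigma(\mathcal{A}_q))\mid\sigma\in\Sigma,q\in Q\}\cup\{((\varepsilon,u),\mathcal{A})\}$, with $\approx_A$ identifying elements with equal language component; a selection function $\pi$ chooses a representative in each class, always choosing $((\varepsilon,u),\mathcal{A})$ for its class. $f^\pi_A(\mathcal{A})=\mathcal{A}_u$, $g^\pi_A(\mathcal{A})=i_u$; if $\ell\neq\mathcal{A}$ is the language component of a class with chosen representative $((\sigma,q),\Delta_\sigma(\mathcal{A}_q))$, then $f^\pi_A(\ell)=\mathcal{A}_{q\sigma}$, $g^\pi_A(\ell)=w(q,\sigma)$; otherwise $f^\pi_A(\ell)=\ell$, $g^\pi_A(\ell)=1$. For $g:L\to M$, $f:L\to L$ with $g(\ell)\cdot f(\ell)=\ell$ for all $\ell$, let $S^{(g,f)}_\varepsilon=\mathrm{id}_L$, $S^{(g,f)}_{\alpha\sigma}=f\circ\Delta_\sigma\circ S^{(g,f)}_\alpha$. For $\ell\in L$, $m\in M$, $N^{(g,f)}(\ell,m)$ is the automaton with state set $\{S^{(g,f)}_\alpha(\ell)\mid\alpha\in\Sigma^*\}$, initial state $\ell$, initial value $m$, $\delta(S^{(g,f)}_\alpha(\ell),\sigma)=S^{(g,f)}_{\alpha\sigma}(\ell)$,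 $w(S^{(g,f)}_\alpha(\ell),\sigma)=g(\Delta_\sigma(S^{(g,f)}_\alpha(\ell)))$, $\rho(S^{(g,f)}_\alpha(\ell))=(S^{(g,f)}_\alpha(\ell))(\varepsilon)$. *)

theory Defs
  imports Main
begin

type_synonym ('a, 'm) lang = "'a list \<Rightarrow> 'm"

definition lscale :: "'m::monoid_mult \<Rightarrow> ('a, 'm) lang \<Rightarrow> ('a, 'm) lang" where
  "lscale m l = (\<lambda>\<gamma>. m * l \<gamma>)"

definition ldelta :: "'a list \<Rightarrow> ('a, 'm) lang \<Rightarrow> ('a, 'm) lang" where
  "ldelta \<alpha> l = (\<lambda>\<gamma>. l (\<alpha> @ \<gamma>))"

record ('q, 'a, 'm) mdfa =
  states :: "'q set"
  init :: 'q
  ival :: 'm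
  delta :: "'q \<Rightarrow> 'a \<Rightarrow> 'q"
  wt :: "'q \<Rightarrow> 'a \<Rightarrow> 'm"
  rho :: "'q \<Rightarrow> 'm"

definition is_mdfa :: "('q, 'a, 'm) mdfa \<Rightarrow> bool" where
  "is_mdfa A \<longleftrightarrow> finite (states A) \<and> states A \<noteq> {} \<and> init A \<in> states A
     \<and> (\<forall>q\<in>states A. \<forall>\<sigma>. delta A q \<sigma> \<in> states A)"

definition dstar :: "('q, 'a, 'm) mdfa \<Rightarrow> 'q \<Rightarrow> 'a list \<Rightarrow> 'q" where
  "dstar A q \<alpha> = foldl (delta A) q \<alpha>"

fun wstar :: "('q, 'a, 'm::monoid_mult) mdfa \<Rightarrow> 'q \<Rightarrow> 'a list \<Rightarrow> 'm" where
  "wstar A q \<alpha> = (if \<alpha> = [] then 1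
      else wstar A q (butlast \<alpha>) * wt A (dstar A q (butlast \<alpha>)) (last \<alpha>))"

declare wstar.simps[simp del]

definition lang :: "('q, 'a, 'm::monoid_mult) mdfa \<Rightarrow> ('a, 'm) lang" where
  "lang A = (\<lambda>\<alpha>. ival A * wstar A (init A) \<alpha> * rho A (dstar A (init A) \<alpha>))"

definition lang_q :: "('q, 'a, 'm::monoid_mult) mdfa \<Rightarrow> 'q \<Rightarrow> ('a, 'm) lang" where
  "lang_q A q = (\<lambda>\<alpha>. wstar A q \<alpha> * rho A (dstar A q \<alpha>))"

definition equivalent :: "('q, 'a, 'm::monoid_mult) mdfa \<Rightarrow> ('p, 'a, 'm) mdfa \<Rightarrow> bool" where
  "equivalent A B \<longleftrightarrow> lang A = lang B"

text \<open>Minimality: no equivalent M-DFA has fewer states.  Since every finite state set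
  can be renamed injectively into nat, it suffices to compare with M-DFAs whose
  states are natural numbers.\<close>
definition minimal :: "('q, 'a, 'm::monoid_mult) mdfa \<Rightarrow> bool" where
  "minimal A \<longleftrightarrow> is_mdfa A \<and>
     (\<forall>B :: (nat, 'a, 'm) mdfa. is_mdfa B \<and> equivalent B A \<longrightarrow> card (states A) \<le> card (states B))"

definition transition_equalized :: "('q, 'a, 'm::monoid_mult) mdfa \<Rightarrow> bool" where
  "transition_equalized A \<longleftrightarrow>
     (\<forall>p\<in>states A. \<forall>q\<in>states A. \<forall>\<sigma> \<tau>.
        ldelta [\<sigma>] (lang_q A q) = ldelta [\<tau>] (lang_q A p) \<longrightarrow>
          delta A q \<sigma> = delta A p \<tau> \<and> wt A q \<sigma> = wt A p \<tau>)"

text \<open>The set P_A.  An index (Some sigma, q) stands for (sigma, q); the index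
  (None, u) stands for (epsilon, u).\<close>
definition PA :: "('q, 'a, 'm::monoid_mult) mdfa \<Rightarrow> (('a option \<times> 'q) \<times> ('a, 'm) lang) set" where
  "PA A = {((Some \<sigma>, q), ldelta [\<sigma>] (lang_q A q)) | \<sigma> q. q \<in> states A}
          \<union> {((None, init A), lang A)}"

text \<open>A selection function picks, for each class of the relation approx_A (i.e. for each
  language component l of P_A), a representative ((pi l), l) of that class, and picks
  ((epsilon,u), lang A) for the class of lang A.\<close>
definition is_selection :: "('q, 'a, 'm::monoid_mult) mdfa \<Rightarrow> (('a, 'm) lang \<Rightarrow> 'a option \<times> 'q) \<Rightarrow> bool" where
  "is_selection A \<pi> \<longleftrightarrow> (\<forall>l \<in> snd ` PA A. (\<pi> l, l) \<in> PA A) \<and> \<pi> (lang A) = (None, init A)"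

definition fact_f :: "('q, 'a, 'm::monoid_mult) mdfa \<Rightarrow> (('a, 'm) lang \<Rightarrow> 'a option \<times> 'q)
     \<Rightarrow> ('a, 'm) lang \<Rightarrow> ('a, 'm) lang" where
  "fact_f A \<pi> l =
     (if l = lang A then lang_q A (init A)
      else if l \<in> snd ` PA A then
        (case \<pi> l of (Some \<sigma>, q) \<Rightarrow> lang_q A (delta A q \<sigma>) | (None, _) \<Rightarrow> l)
      else l)"

definition fact_g :: "('q, 'a, 'm::monoid_mult) mdfa \<Rightarrow> (('a, 'm) lang \<Rightarrow> 'a option \<times> 'q)
     \<Rightarrow> ('a, 'm) lang \<Rightarrow> 'm" where
  "fact_g A \<pi> l =
     (if l = lang A then ival A
      else if l \<in> snd ` PA A then
        (case \<pi> l of (Some \<sigma>, q) \<Rightarrow> wt A q \<sigma> | (None, _) \<Rightarrow> 1)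
      else 1)"

definition Sgf :: "(('a, 'm) lang \<Rightarrow> ('a, 'm) lang) \<Rightarrow> 'a list \<Rightarrow> ('a, 'm) lang \<Rightarrow> ('a, 'm) lang" where
  "Sgf f \<alpha> l = foldl (\<lambda>s \<sigma>. f (ldelta [\<sigma>] s)) l \<alpha>"

text \<open>The automaton N^(g,f)(l, m).  Its transition on state S_alpha(l) and letter sigma is
  S_(alpha sigma)(l) = f(Delta_sigma(S_alpha(l))), which depends only on the state.\<close>
definition Naut :: "(('a, 'm) lang \<Rightarrow> 'm) \<Rightarrow> (('a, 'm) lang \<Rightarrow> ('a, 'm) lang)
     \<Rightarrow> ('a, 'm) lang \<Rightarrow> 'm \<Rightarrow> (('a, 'm) lang, 'a, 'm) mdfa" where
  "Naut g f l m =
     \<lparr> states = {Sgf f \<alpha> l | \<alpha>. True},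
       init = l,
       ival = m,
       delta = (\<lambda>s \<sigma>. f (ldelta [\<sigma>] s)),
       wt = (\<lambda>s \<sigma>. g (ldelta [\<sigma>] s)),
       rho = (\<lambda>s. s []) \<rparr>"

end

theory Submission
  imports Defs
begin

text \<open>Since \<open>g\<^sup>\<pi>\<^sub>A(l) \<cdot> f\<^sup>\<pi>\<^sub>A(l) = l\<close>, every state \<open>s\<close> of \<open>N\<close> recognises exactly \<open>s\<close>; hence \<open>N\<close>
  recognises \<open>\<A>\<close>, and \<open>N\<close> is transition-equalized because its transitions out of \<open>s\<close> depend
  only on \<open>\<Delta>\<^sub>\<sigma>(s)\<close>. Every value of \<open>f\<^sup>\<pi>\<^sub>A\<close> on \<open>P\<^sub>A\<close> is a state language \<open>\<A>\<^sub>q\<close>, so \<open>N\<close> has at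
  most \<open>|Q|\<close> states and inherits minimality. In a minimal automaton no two distinct states have
  languages differing by a scalar factor (one could be merged into the other), so \<open>f\<^sup>\<pi>\<^sub>A\<close> fixes
  every \<open>\<A>\<^sub>q\<close>, which gives idempotence; transition-equalization makes the target state of the
  chosen representative independent of \<open>\<pi>\<close>.\<close>

subsection \<open>Runs of an automaton\<close>

lemma wstar_Nil [simp]: "wstar A q [] = 1"
  by (subst wstar.simps) simp

lemma wstar_snoc: "wstar A q (\<alpha> @ [\<sigma>]) = wstar A q \<alpha> * wt A (dstar A q \<alpha>) \<sigma>"
  by (subst wstar.simps) simp

lemma dstar_Nil [simp]: "dstar A q [] = q"
  by (simp add: dstar_def)

lemma dstar_Cons [simp]: "dstar A q (\<sigma> # \<gamma>) = dstar A (delta A q \<sigma>) \<gamma>"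
  by (simp add: dstar_def)

lemma wstar_Cons: "wstar A q (\<sigma> # \<gamma>) = wt A q \<sigma> * wstar A (delta A q \<sigma>) \<gamma>"
proof (induction \<gamma> rule: rev_induct)
  case Nil
  then show ?case
    using wstar_snoc[of A q "[]" \<sigma>] by simp
next
  case (snoc \<tau> \<gamma>)
  have "wstar A q (\<sigma> # \<gamma> @ [\<tau>]) = wstar A q (\<sigma> # \<gamma>) * wt A (dstar A q (\<sigma> # \<gamma>)) \<tau>"
    using wstar_snoc[of A q "\<sigma> # \<gamma>" \<tau>] by simp
  also have "\<dots> = wt A q \<sigma> * wstar A (delta A q \<sigma>) (\<gamma> @ [\<tau>])"
    using snoc wstar_snoc[of A "delta A q \<sigma>" \<gamma> \<tau>] by (simp add: mult.assoc)
  finally show ?case .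
qed

lemma ldelta_singleton [simp]: "ldelta [\<sigma>] l \<gamma> = l (\<sigma> # \<gamma>)"
  by (simp add: ldelta_def)

lemma lang_q_Nil [simp]: "lang_q A q [] = rho A q"
  by (simp add: lang_q_def)

lemma lang_q_Cons: "lang_q A q (\<sigma> # \<gamma>) = wt A q \<sigma> * lang_q A (delta A q \<sigma>) \<gamma>"
  by (simp add: lang_q_def wstar_Cons mult.assoc)

lemma ldelta_lang_q: "ldelta [\<sigma>] (lang_q A q) = lscale (wt A q \<sigma>) (lang_q A (delta A q \<sigma>))"
  by (simp add: lscale_def lang_q_Cons fun_eq_iff)

lemma lang_eq_lscale_lang_q: "lang A = lscale (ival A) (lang_q A (init A))"
  by (simp add: lang_def lang_q_def lscale_def mult.assoc)

lemma lscale_eq_iff: "lscale m l = l' \<longleftrightarrow> (\<forall>\<gamma>. m * l \<gamma> = l' \<gamma>)"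
  by (auto simp: lscale_def)

subsection \<open>Minimality\<close>

lemma mdfa_rename_to_nat:
  fixes B :: "('q, 'a, 'm::monoid_mult) mdfa"
  assumes "is_mdfa B"
  obtains C :: "(nat, 'a, 'm) mdfa"
  where "is_mdfa C" "equivalent C B" "card (states C) = card (states B)"
proof -
  have fin: "finite (states B)" and closed: "\<And>q \<sigma>. q \<in> states B \<Longrightarrow> delta B q \<sigma> \<in> states B"
    using assms by (simp_all add: is_mdfa_def)
  then obtain h :: "'q \<Rightarrow> nat" where inj: "inj_on h (states B)"
    using finite_imp_inj_to_nat_seg by blast
  define h' where "h' = the_inv_into (states B) h"
  have h'_h: "h' (h q) = q" if "q \<in> states B" for q
    unfolding h'_def using inj that by (rule the_inv_into_f_f)
  define C :: "(nat, 'a, 'm) mdfa" where "C = \<lparr> states = h ` states B, init = h (init B),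
     ival = ival B, delta = (\<lambda>n \<sigma>. h (delta B (h' n) \<sigma>)), wt = (\<lambda>n \<sigma>. wt B (h' n) \<sigma>),
     rho = (\<lambda>n. rho B (h' n)) \<rparr>"
  have lang_q_C: "lang_q C (h q) \<gamma> = lang_q B q \<gamma>" if "q \<in> states B" for q \<gamma>
    using that
  proof (induction \<gamma> arbitrary: q)
    case Nil
    then show ?case by (simp add: C_def h'_h)
  next
    case (Cons \<sigma> \<gamma>)
    then show ?case by (simp add: lang_q_Cons C_def h'_h closed)
  qed
  have "is_mdfa C"
    using assms fin by (auto simp: is_mdfa_def C_def h'_h)
  moreover have "equivalent C B"
  proof -
    have "init C = h (init B)" "ival C = ival B" "init B \<in> states B"
      using assms by (simp_all add: C_def is_mdfa_def)
    then show ?thesis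
      by (simp add: equivalent_def lang_eq_lscale_lang_q lscale_def lang_q_C)
  qed
  moreover have "card (states C) = card (states B)"
    using inj by (simp add: C_def card_image)
  ultimately show thesis by (rule that)
qed

lemma minimal_card_le:
  fixes A :: "('q, 'a, 'm::monoid_mult) mdfa" and B :: "('p, 'a, 'm) mdfa"
  assumes "minimal A" "is_mdfa B" "equivalent B A"
  shows "card (states A) \<le> card (states B)"
proof -
  obtain C :: "(nat, 'a, 'm) mdfa"
    where C: "is_mdfa C" "equivalent C B" "card (states C) = card (states B)"
    using mdfa_rename_to_nat[OF assms(2)] by blast
  have "equivalent C A"
    using C(2) assms(3) by (simp add: equivalent_def)
  then show ?thesis
    using assms(1) C unfolding minimal_def by auto
qed

lemma minimal_if_equivalent_card_le:
  fixes A :: "('q, 'a, 'm::monoid_mult) mdfa" and N :: "('p, 'a, 'm) mdfa"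
  assumes "minimal A" "is_mdfa N" "equivalent N A" "card (states N) \<le> card (states A)"
  shows "minimal N"
  unfolding minimal_def
proof (intro conjI allI impI)
  fix B :: "(nat, 'a, 'm) mdfa"
  assume "is_mdfa B \<and> equivalent B N"
  then have "card (states A) \<le> card (states B)"
    using assms(1,3) by (intro minimal_card_le) (auto simp: equivalent_def)
  then show "card (states N) \<le> card (states B)"
    using assms(4) by linarith
qed (rule assms(2))

lemma minimal_equivalent_exists:
  fixes A :: "('q, 'a, 'm::monoid_mult) mdfa"
  assumes "is_mdfa A"
  obtains B :: "(nat, 'a, 'm) mdfa" where "minimal B" "equivalent B A"
proof -
  let ?P = "\<lambda>B :: (nat, 'a, 'm) mdfa. is_mdfa B \<and> equivalent B A"
  obtain C where "?P C"
    using mdfa_rename_to_nat[OF assms] by metis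
  then obtain B where B: "?P B" "\<And>C. ?P C \<Longrightarrow> card (states B) \<le> card (states C)"
    using ex_has_least_nat[of ?P C "card \<circ> states"] by auto
  have "minimal B"
    unfolding minimal_def using B by (auto simp: equivalent_def)
  then show thesis
    using B(1) that by blast
qed

text \<open>Redirecting every transition into \<open>r\<close> to \<open>s\<close>, with the weight corrected by \<open>m\<close>, removes
  the state \<open>r\<close> without changing the recognised language when \<open>\<A>\<^sub>r = m \<cdot> \<A>\<^sub>s\<close>.\<close>

definition merge_state :: "('q, 'a, 'm::monoid_mult) mdfa \<Rightarrow> 'q \<Rightarrow> 'q \<Rightarrow> 'm \<Rightarrow> ('q, 'a, 'm) mdfa" where
  "merge_state A r s m = \<lparr> states = states A - {r},
     init = (if init A = r then s else init A),
     ival = (if init A = r then ival A * m else ival A),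
     delta = (\<lambda>q \<sigma>. if delta A q \<sigma> = r then s else delta A q \<sigma>),
     wt = (\<lambda>q \<sigma>. if delta A q \<sigma> = r then wt A q \<sigma> * m else wt A q \<sigma>),
     rho = rho A \<rparr>"

lemma lang_q_merge_state:
  assumes "s \<noteq> r" "lang_q A r = lscale m (lang_q A s)" "q \<noteq> r"
  shows "lang_q (merge_state A r s m) q = lang_q A q"
proof
  fix \<gamma>
  show "lang_q (merge_state A r s m) q \<gamma> = lang_q A q \<gamma>"
    using assms(3)
  proof (induction \<gamma> arbitrary: q)
    case Nil
    then show ?case by (simp add: merge_state_def)
  next
    case (Cons \<sigma> \<gamma>)
    then show ?case
      using assms(1,2) by (simp add: lang_q_Cons merge_state_def lscale_def mult.assoc)
  qed
qed

lemma merge_state_smaller_equivalent: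
  assumes "is_mdfa A" "r \<in> states A" "s \<in> states A" "s \<noteq> r"
    and "lang_q A r = lscale m (lang_q A s)"
  shows "is_mdfa (merge_state A r s m)" "equivalent (merge_state A r s m) A"
    and "card (states (merge_state A r s m)) < card (states A)"
proof -
  show "is_mdfa (merge_state A r s m)"
    using assms(1,3,4) by (auto simp: is_mdfa_def merge_state_def)
  have "lang (merge_state A r s m) = lang A"
  proof (cases "init A = r")
    case True
    then show ?thesis
      using assms(4,5) lang_q_merge_state[OF assms(4,5), of s]
      by (simp add: lang_eq_lscale_lang_q merge_state_def lscale_def fun_eq_iff mult.assoc)
  next
    case False
    then show ?thesis
      using lang_q_merge_state[OF assms(4,5) False]
      by (simp add: lang_eq_lscale_lang_q merge_state_def)
  qed
  then show "equivalent (merge_state A r s m) A"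
    by (simp add: equivalent_def)
  show "card (states (merge_state A r s m)) < card (states A)"
    using assms(1,2) by (simp add: merge_state_def is_mdfa_def card_gt_0_iff)
qed

lemma minimal_lang_q_eq_lscale_imp_eq:
  assumes "minimal A" "r \<in> states A" "s \<in> states A"
    and "lang_q A r = lscale m (lang_q A s)"
  shows "r = s"
proof (rule ccontr)
  assume "r \<noteq> s"
  then have "s \<noteq> r" by simp
  have "is_mdfa A"
    using assms(1) by (simp add: minimal_def)
  from merge_state_smaller_equivalent[OF this assms(2,3) \<open>s \<noteq> r\<close> assms(4)]
  show False
    using minimal_card_le[OF assms(1)] by fastforce
qed

subsection \<open>The automaton of a factorization\<close>

definition factorization :: "(('a, 'm::monoid_mult) lang \<Rightarrow> 'm) \<Rightarrow> (('a, 'm) lang \<Rightarrow> ('a, 'm) lang) \<Rightarrow> bool" where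
  "factorization g f \<longleftrightarrow> (\<forall>l. lscale (g l) (f l) = l)"

lemma factorizationD: "factorization g f \<Longrightarrow> g l * f l \<gamma> = l \<gamma>"
  unfolding factorization_def lscale_eq_iff by blast

lemma Sgf_Nil [simp]: "Sgf f [] l = l"
  by (simp add: Sgf_def)

lemma Sgf_snoc: "Sgf f (\<alpha> @ [\<sigma>]) l = f (ldelta [\<sigma>] (Sgf f \<alpha> l))"
  by (simp add: Sgf_def)

lemma Naut_simps [simp]:
  "states (Naut g f l m) = range (\<lambda>\<alpha>. Sgf f \<alpha> l)"
  "init (Naut g f l m) = l"
  "ival (Naut g f l m) = m"
  "delta (Naut g f l m) s \<sigma> = f (ldelta [\<sigma>] s)"
  "wt (Naut g f l m) s \<sigma> = g (ldelta [\<sigma>] s)"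
  "rho (Naut g f l m) s = s []"
  by (auto simp: Naut_def)

lemma is_mdfa_Naut:
  assumes "finite (states (Naut g f l m))"
  shows "is_mdfa (Naut g f l m)"
  unfolding is_mdfa_def
proof (intro conjI ballI allI)
  show "init (Naut g f l m) \<in> states (Naut g f l m)"
    using Sgf_Nil[of f l] by (metis Naut_simps(1,2) rangeI)
  then show "states (Naut g f l m) \<noteq> {}" by blast
  fix s \<sigma>
  assume "s \<in> states (Naut g f l m)"
  then obtain \<alpha> where "s = Sgf f \<alpha> l" by auto
  then show "delta (Naut g f l m) s \<sigma> \<in> states (Naut g f l m)"
    using Sgf_snoc[of f \<alpha> \<sigma> l] by (metis Naut_simps(1,4) rangeI)
qed (rule assms)

lemma lang_q_Naut:
  assumes "factorization g f"
  shows "lang_q (Naut g f l m) s = s"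
proof
  fix \<gamma>
  show "lang_q (Naut g f l m) s \<gamma> = s \<gamma>"
  proof (induction \<gamma> arbitrary: s)
    case Nil
    then show ?case by simp
  next
    case (Cons \<sigma> \<gamma>)
    then show ?case
      by (simp add: lang_q_Cons factorizationD[OF assms])
  qed
qed

lemma lang_Naut: "factorization g f \<Longrightarrow> lang (Naut g f l m) = lscale m l"
  by (simp add: lang_eq_lscale_lang_q lang_q_Naut)

lemma transition_equalized_Naut:
  "factorization g f \<Longrightarrow> transition_equalized (Naut g f l m)"
  by (simp add: transition_equalized_def lang_q_Naut)

subsection \<open>The factorization induced by an automaton\<close>

lemma lang_in_PA: "lang A \<in> snd ` PA A"
  by (force simp: PA_def)

lemma ldelta_lang_q_in_PA: "q \<in> states A \<Longrightarrow> ldelta [\<sigma>] (lang_q A q) \<in> snd ` PA A"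
  by (force simp: PA_def)

lemma selection_Some:
  assumes "is_selection A \<pi>" "l \<in> snd ` PA A" "l \<noteq> lang A"
  obtains \<sigma> q where "\<pi> l = (Some \<sigma>, q)" "q \<in> states A" "l = ldelta [\<sigma>] (lang_q A q)"
proof -
  have "(\<pi> l, l) \<in> PA A"
    using assms(1,2) unfolding is_selection_def by blast
  then show thesis
    using assms(3) that by (auto simp: PA_def)
qed

lemma fact_f_selected:
  assumes "\<pi> l = (Some \<sigma>, q)" "l \<in> snd ` PA A" "l \<noteq> lang A"
  shows "fact_f A \<pi> l = lang_q A (delta A q \<sigma>)" "fact_g A \<pi> l = wt A q \<sigma>"
  using assms by (simp_all add: fact_f_def fact_g_def)

lemma fact_f_lang [simp]: "fact_f A \<pi> (lang A) = lang_q A (init A)"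
  by (simp add: fact_f_def)

lemma fact_f_notin_PA: "l \<notin> snd ` PA A \<Longrightarrow> fact_f A \<pi> l = l"
  using lang_in_PA by (auto simp: fact_f_def)

lemma factorization_fact:
  assumes "is_selection A \<pi>"
  shows "factorization (fact_g A \<pi>) (fact_f A \<pi>)"
  unfolding factorization_def
proof
  fix l
  consider "l = lang A" | "l \<in> snd ` PA A" "l \<noteq> lang A" | "l \<notin> snd ` PA A"
    by blast
  then show "lscale (fact_g A \<pi> l) (fact_f A \<pi> l) = l"
  proof cases
    case 1
    then show ?thesis by (simp add: fact_g_def) (simp add: lang_eq_lscale_lang_q)
  next
    case 2
    then obtain \<sigma> q where "\<pi> l = (Some \<sigma>, q)" "l = ldelta [\<sigma>] (lang_q A q)"
      using selection_Some[OF assms] by metis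
    then show ?thesis
      using 2 by (simp add: fact_f_selected ldelta_lang_q)
  next
    case 3
    then show ?thesis
      using lang_in_PA by (auto simp: fact_f_def fact_g_def lscale_def)
  qed
qed

lemma fact_f_in_lang_q_image:
  assumes "is_mdfa A" "is_selection A \<pi>" "l \<in> snd ` PA A"
  shows "fact_f A \<pi> l \<in> lang_q A ` states A"
proof (cases "l = lang A")
  case True
  then show ?thesis
    using assms(1) by (simp add: is_mdfa_def)
next
  case False
  then obtain \<sigma> q where "\<pi> l = (Some \<sigma>, q)" "q \<in> states A"
    using selection_Some[OF assms(2,3)] by metis
  then show ?thesis
    using assms False by (simp add: fact_f_selected is_mdfa_def)
qed

definition induced_mdfa :: "('q, 'a, 'm::monoid_mult) mdfa \<Rightarrow> (('a, 'm) lang \<Rightarrow> 'a option \<times> 'q)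
     \<Rightarrow> (('a, 'm) lang, 'a, 'm) mdfa" where
  "induced_mdfa A \<pi> = Naut (fact_g A \<pi>) (fact_f A \<pi>) (fact_f A \<pi> (lang A)) (fact_g A \<pi> (lang A))"

lemma states_induced_mdfa_subset:
  assumes "is_mdfa A" "is_selection A \<pi>"
  shows "states (induced_mdfa A \<pi>) \<subseteq> lang_q A ` states A"
proof -
  have "Sgf (fact_f A \<pi>) \<alpha> (lang_q A (init A)) \<in> lang_q A ` states A" for \<alpha>
  proof (induction \<alpha> rule: rev_induct)
    case Nil
    then show ?case
      using assms(1) by (simp add: is_mdfa_def)
  next
    case (snoc \<sigma> \<alpha>)
    then show ?case
      using fact_f_in_lang_q_image[OF assms ldelta_lang_q_in_PA] by (auto simp: Sgf_snoc)
  qed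
  then show ?thesis
    by (auto simp: induced_mdfa_def)
qed

lemma induced_mdfa_card_le:
  assumes "is_mdfa A" "is_selection A \<pi>"
  shows "finite (states (induced_mdfa A \<pi>))" "card (states (induced_mdfa A \<pi>)) \<le> card (states A)"
proof -
  have "finite (states A)"
    using assms(1) by (simp add: is_mdfa_def)
  then show "finite (states (induced_mdfa A \<pi>))" "card (states (induced_mdfa A \<pi>)) \<le> card (states A)"
    using states_induced_mdfa_subset[OF assms]
    by (auto intro: finite_subset order_trans[OF card_mono card_image_le])
qed

lemma induced_mdfa_equivalent:
  assumes "is_mdfa A" "is_selection A \<pi>"
  shows "is_mdfa (induced_mdfa A \<pi>)" "equivalent (induced_mdfa A \<pi>) A"
    and "transition_equalized (induced_mdfa A \<pi>)"
proof -
  have fac: "factorization (fact_g A \<pi>) (fact_f A \<pi>)"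
    using assms(2) by (rule factorization_fact)
  then have "lscale (fact_g A \<pi> (lang A)) (fact_f A \<pi> (lang A)) = lang A"
    unfolding factorization_def by blast
  then show "is_mdfa (induced_mdfa A \<pi>)" "equivalent (induced_mdfa A \<pi>) A"
    and "transition_equalized (induced_mdfa A \<pi>)"
    using induced_mdfa_card_le[OF assms]
    by (simp_all add: induced_mdfa_def is_mdfa_Naut lang_Naut[OF fac] equivalent_def
        transition_equalized_Naut[OF fac])
qed

lemma minimal_induced_mdfa:
  assumes "minimal A" "is_selection A \<pi>"
  shows "minimal (induced_mdfa A \<pi>)"
proof -
  have "is_mdfa A"
    using assms(1) by (simp add: minimal_def)
  then show ?thesis
    using assms induced_mdfa_equivalent induced_mdfa_card_le
    by (blast intro: minimal_if_equivalent_card_le)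
qed

lemma selection_exists: "\<exists>\<pi>. is_selection A \<pi>"
proof -
  define \<pi> where "\<pi> l = (if l = lang A then (None, init A) else SOME i. (i, l) \<in> PA A)" for l
  have "(\<pi> l, l) \<in> PA A" if "l \<in> snd ` PA A" for l
  proof (cases "l = lang A")
    case True
    then show ?thesis by (simp add: \<pi>_def PA_def)
  next
    case False
    from that obtain i where "(i, l) \<in> PA A" by force
    then show ?thesis
      using False someI[of "\<lambda>i. (i, l) \<in> PA A"] unfolding \<pi>_def by simp
  qed
  then have "is_selection A \<pi>"
    by (simp add: is_selection_def \<pi>_def)
  then show ?thesis by blast
qed

lemma minimal_transition_equalized_exists:
  fixes A :: "('q, 'a, 'm::monoid_mult) mdfa"
  assumes "is_mdfa A"
  shows "\<exists>B :: (('a, 'm) lang, 'a, 'm) mdfa. minimal B \<and> transition_equalized B \<and> equivalent B A"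
proof -
  obtain B0 :: "(nat, 'a, 'm) mdfa" where B0: "minimal B0" "equivalent B0 A"
    using minimal_equivalent_exists[OF assms] by blast
  obtain \<pi> where "is_selection B0 \<pi>"
    using selection_exists by blast
  moreover have "is_mdfa B0"
    using B0(1) by (simp add: minimal_def)
  ultimately show ?thesis
    using B0 induced_mdfa_equivalent minimal_induced_mdfa
    by (metis equivalent_def)
qed

lemma fact_f_lang_q:
  assumes "minimal A" "is_selection A \<pi>" "r \<in> states A"
  shows "fact_f A \<pi> (lang_q A r) = lang_q A r"
proof -
  have A: "is_mdfa A"
    using assms(1) by (simp add: minimal_def)
  consider "lang_q A r = lang A" | "lang_q A r \<in> snd ` PA A" "lang_q A r \<noteq> lang A"
    | "lang_q A r \<notin> snd ` PA A"
    by blast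
  then show ?thesis
  proof cases
    case 1
    have "init A \<in> states A"
      using A by (simp add: is_mdfa_def)
    moreover have "lang_q A r = lscale (ival A) (lang_q A (init A))"
      using 1 by (simp add: lang_eq_lscale_lang_q)
    ultimately have "r = init A"
      using minimal_lang_q_eq_lscale_imp_eq[OF assms(1,3)] by blast
    then show ?thesis
      using 1 fact_f_lang[of A \<pi>] by simp
  next
    case 2
    then obtain \<sigma> q where q: "\<pi> (lang_q A r) = (Some \<sigma>, q)" "q \<in> states A"
      "lang_q A r = ldelta [\<sigma>] (lang_q A q)"
      using selection_Some[OF assms(2)] by metis
    have "delta A q \<sigma> \<in> states A"
      using A q(2) by (simp add: is_mdfa_def)
    then have "r = delta A q \<sigma>"
      using q(3) minimal_lang_q_eq_lscale_imp_eq[OF assms(1,3)] by (simp add: ldelta_lang_q)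
    then show ?thesis
      using 2 q by (simp add: fact_f_selected)
  next
    case 3
    then show ?thesis by (rule fact_f_notin_PA)
  qed
qed

lemma fact_f_idempotent:
  assumes "minimal A" "is_selection A \<pi>"
  shows "fact_f A \<pi> \<circ> fact_f A \<pi> = fact_f A \<pi>"
proof
  fix l
  have "is_mdfa A"
    using assms(1) by (simp add: minimal_def)
  then consider "l \<notin> snd ` PA A" | r where "r \<in> states A" "fact_f A \<pi> l = lang_q A r"
    using fact_f_in_lang_q_image[OF _ assms(2)] by blast
  then show "(fact_f A \<pi> \<circ> fact_f A \<pi>) l = fact_f A \<pi> l"
  proof cases
    case 1
    then show ?thesis by (simp add: fact_f_notin_PA)
  next
    case 2
    then show ?thesis by (simp add: fact_f_lang_q[OF assms])
  qed
qed

lemma transition_equalized_fact_f_eq: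
  assumes "transition_equalized A" "is_selection A \<pi>1" "is_selection A \<pi>2"
  shows "fact_f A \<pi>1 = fact_f A \<pi>2"
proof
  fix l
  show "fact_f A \<pi>1 l = fact_f A \<pi>2 l"
  proof (cases "l \<in> snd ` PA A \<and> l \<noteq> lang A")
    case True
    obtain \<sigma>1 q1 where q1: "\<pi>1 l = (Some \<sigma>1, q1)" "q1 \<in> states A" "l = ldelta [\<sigma>1] (lang_q A q1)"
      using selection_Some[OF assms(2)] True by blast
    obtain \<sigma>2 q2 where q2: "\<pi>2 l = (Some \<sigma>2, q2)" "q2 \<in> states A" "l = ldelta [\<sigma>2] (lang_q A q2)"
      using selection_Some[OF assms(3)] True by blast
    have "delta A q1 \<sigma>1 = delta A q2 \<sigma>2"
      using assms(1) q1(2,3) q2(2,3) unfolding transition_equalized_def by metis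
    then show ?thesis
      using True q1(1) q2(1) by (simp add: fact_f_selected)
  next
    case False
    then show ?thesis
      by (metis fact_f_lang fact_f_notin_PA)
  qed
qed

theorem mainTheorem11:
  fixes A :: "('q, 'a::finite, 'm::monoid_mult) mdfa"
    and \<pi> :: "('a, 'm) lang \<Rightarrow> 'a option \<times> 'q"
  assumes "is_mdfa A"
    and "is_selection A \<pi>"
  defines "N \<equiv> Naut (fact_g A \<pi>) (fact_f A \<pi>) (fact_f A \<pi> (lang A)) (fact_g A \<pi> (lang A))"
  shows "(is_mdfa N \<and> equivalent N A)
    \<and> transition_equalized N
    \<and> (minimal A \<longrightarrow> minimal N)
    \<and> (\<exists>B :: (('a, 'm) lang, 'a, 'm) mdfa. minimal B \<and> transition_equalized B \<and> equivalent B A)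
    \<and> (minimal A \<longrightarrow> fact_f A \<pi> \<circ> fact_f A \<pi> = fact_f A \<pi>)
    \<and> (minimal A \<and> transition_equalized A \<longrightarrow>
           (\<forall>\<pi>1 \<pi>2. is_selection A \<pi>1 \<and> is_selection A \<pi>2 \<longrightarrow> fact_f A \<pi>1 = fact_f A \<pi>2))"
proof -
  have N: "N = induced_mdfa A \<pi>"
    by (simp add: N_def induced_mdfa_def)
  show ?thesis
    unfolding N
    using induced_mdfa_equivalent[OF assms(1,2)] minimal_induced_mdfa[OF _ assms(2)]
      minimal_transition_equalized_exists[OF assms(1)] fact_f_idempotent[OF _ assms(2)]
      transition_equalized_fact_f_eq
    by blast
qed

end
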